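(* For $\kappa$ countably infinite, the lattice $S$ is a countable bounded modular lattice.
   Context: $\mathcal{F}(\kappa)$ is the Boolean lattice of subsets $X\subseteq\kappa$ that are finite or cofinite. For sets $A,B,C$, $\mu(A,B,C)=(A\cap B)\cup(A\cap C)\cup(B\cap C)$. A triple is balanced if $A\cap B=A\cap C=B\cap C$. $S$ is the set of balanced triples $(A,B,C)\in\mathcal{F}(\kappa)^3$ with $C\setminus\mu(A,B,C)$ finite, ordered componentwise; it is a lattice with componentwise intersection as meet and join $(A,B,C)\vee(A',B',C')=(U_1\cup m,U_2\cup m,U_3\cup m)$ where $U_1=A\cup A'$, $U_2=B\cup B'$, $U_3=C\cup C'$, $m=\mu(U_1,U_2,U_3)$. *)

theory Defs
  imports Main "HOL-Library.Countable_Set"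
begin

definition fincof :: "'a set \<Rightarrow> 'a set set" where
  "fincof K = {X. X \<subseteq> K \<and> (finite X \<or> finite (K - X))}"

definition med :: "'a set \<Rightarrow> 'a set \<Rightarrow> 'a set \<Rightarrow> 'a set" where
  "med A B C = (A \<inter> B) \<union> (A \<inter> C) \<union> (B \<inter> C)"

definition balanced :: "'a set \<Rightarrow> 'a set \<Rightarrow> 'a set \<Rightarrow> bool" where
  "balanced A B C \<longleftrightarrow> A \<inter> B = A \<inter> C \<and> A \<inter> C = B \<inter> C"

definition Striples :: "'a set \<Rightarrow> ('a set \<times> 'a set \<times> 'a set) set" where
  "Striples K = {(A, B, C). A \<in> fincof K \<and> B \<in> fincof K \<and> C \<in> fincof K
      \<and> balanced A B C \<and> finite (C - med A B C)}"

definition tle :: "'a set \<times> 'a set \<times> 'a set \<Rightarrow> 'a set \<times> 'a set \<times> 'a set \<Rightarrow> bool" where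
  "tle x y \<longleftrightarrow> (case x of (A, B, C) \<Rightarrow> case y of (A', B', C') \<Rightarrow>
      A \<subseteq> A' \<and> B \<subseteq> B' \<and> C \<subseteq> C')"

definition tmeet :: "'a set \<times> 'a set \<times> 'a set \<Rightarrow> 'a set \<times> 'a set \<times> 'a set \<Rightarrow> 'a set \<times> 'a set \<times> 'a set" where
  "tmeet x y = (case x of (A, B, C) \<Rightarrow> case y of (A', B', C') \<Rightarrow>
      (A \<inter> A', B \<inter> B', C \<inter> C'))"

definition tjoin :: "'a set \<times> 'a set \<times> 'a set \<Rightarrow> 'a set \<times> 'a set \<times> 'a set \<Rightarrow> 'a set \<times> 'a set \<times> 'a set" where
  "tjoin x y = (case x of (A, B, C) \<Rightarrow> case y of (A', B', C') \<Rightarrow>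
      (let U1 = A \<union> A'; U2 = B \<union> B'; U3 = C \<union> C'; m = med U1 U2 U3
       in (U1 \<union> m, U2 \<union> m, U3 \<union> m)))"

definition is_lattice_with :: "'b set \<Rightarrow> ('b \<Rightarrow> 'b \<Rightarrow> bool) \<Rightarrow> ('b \<Rightarrow> 'b \<Rightarrow> 'b) \<Rightarrow> ('b \<Rightarrow> 'b \<Rightarrow> 'b) \<Rightarrow> bool" where
  "is_lattice_with S le mt jn \<longleftrightarrow>
     (\<forall>x\<in>S. le x x) \<and>
     (\<forall>x\<in>S. \<forall>y\<in>S. le x y \<and> le y x \<longrightarrow> x = y) \<and>
     (\<forall>x\<in>S. \<forall>y\<in>S. \<forall>z\<in>S. le x y \<and> le y z \<longrightarrow> le x z) \<and>
     (\<forall>x\<in>S. \<forall>y\<in>S. mt x y \<in> S \<and> le (mt x y) x \<and> le (mt x y) y \<and>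
        (\<forall>z\<in>S. le z x \<and> le z y \<longrightarrow> le z (mt x y))) \<and>
     (\<forall>x\<in>S. \<forall>y\<in>S. jn x y \<in> S \<and> le x (jn x y) \<and> le y (jn x y) \<and>
        (\<forall>z\<in>S. le x z \<and> le y z \<longrightarrow> le (jn x y) z))"

definition is_bounded :: "'b set \<Rightarrow> ('b \<Rightarrow> 'b \<Rightarrow> bool) \<Rightarrow> bool" where
  "is_bounded S le \<longleftrightarrow> (\<exists>b\<in>S. \<exists>t\<in>S. \<forall>x\<in>S. le b x \<and> le x t)"

definition is_modular :: "'b set \<Rightarrow> ('b \<Rightarrow> 'b \<Rightarrow> bool) \<Rightarrow> ('b \<Rightarrow> 'b \<Rightarrow> 'b) \<Rightarrow> ('b \<Rightarrow> 'b \<Rightarrow> 'b) \<Rightarrow> bool" where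
  "is_modular S le mt jn \<longleftrightarrow>
     (\<forall>x\<in>S. \<forall>y\<in>S. \<forall>z\<in>S. le x z \<longrightarrow> jn x (mt y z) = mt (jn x y) z)"

end

theory Submission
  imports Defs
begin

text \<open>The median of a balanced triple is its common pairwise intersection. The join
  therefore only adds the median of the componentwise unions to each component, and the
  excess of the third component over the median stays inside the union of the two old
  excesses, so S is closed under meet and join. The least-upper-bound property and the
  modular law are then set identities between balanced triples. Countability holds because
  a countable set has only countably many finite, hence countably many cofinite, subsets.\<close>

lemma fincof_Int: "A \<in> fincof K \<Longrightarrow> B \<in> fincof K \<Longrightarrow> A \<inter> B \<in> fincof K"
  unfolding fincof_def by (auto simp: Diff_Int)

lemma fincof_Un: "A \<in> fincof K \<Longrightarrow> B \<in> fincof K \<Longrightarrow> A \<union> B \<in> fincof K"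
  unfolding fincof_def by (auto intro: finite_subset[of "K - (A \<union> B)"])

lemma fincof_med:
  "A \<in> fincof K \<Longrightarrow> B \<in> fincof K \<Longrightarrow> C \<in> fincof K \<Longrightarrow> med A B C \<in> fincof K"
  unfolding med_def by (intro fincof_Un fincof_Int)

lemma countable_fincof:
  assumes "countable K"
  shows "countable (fincof K)"
proof -
  let ?Fin = "{X. finite X \<and> X \<subseteq> K}"
  have "fincof K \<subseteq> ?Fin \<union> (\<lambda>Y. K - Y) ` ?Fin"
  proof
    fix X assume "X \<in> fincof K"
    then have "X \<subseteq> K" and "finite X \<or> finite (K - X)" unfolding fincof_def by auto
    moreover have "X = K - (K - X)" using \<open>X \<subseteq> K\<close> by blast
    ultimately show "X \<in> ?Fin \<union> (\<lambda>Y. K - Y) ` ?Fin" by blast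
  qed
  moreover have "countable ?Fin" using countable_Collect_finite_subset[OF assms] .
  ultimately show ?thesis by (meson countable_Un countable_image countable_subset)
qed

lemma med_balanced: "balanced A B C \<Longrightarrow> med A B C = A \<inter> B"
  unfolding balanced_def med_def by blast

lemma mem_Striples_iff:
  "(A, B, C) \<in> Striples K \<longleftrightarrow> A \<in> fincof K \<and> B \<in> fincof K \<and> C \<in> fincof K
      \<and> balanced A B C \<and> finite (C - med A B C)"
  unfolding Striples_def by simp

lemma countable_Striples:
  assumes "countable K"
  shows "countable (Striples K)"
proof -
  have "countable (fincof K \<times> fincof K \<times> fincof K)"
    using countable_fincof[OF assms] by (intro countable_SIGMA) auto
  moreover have "Striples K \<subseteq> fincof K \<times> fincof K \<times> fincof K"
    unfolding Striples_def by auto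
  ultimately show ?thesis by (rule countable_subset[rotated])
qed

lemma tle_iff [simp]: "tle (A, B, C) (A', B', C') \<longleftrightarrow> A \<subseteq> A' \<and> B \<subseteq> B' \<and> C \<subseteq> C'"
  unfolding tle_def by simp

lemma tmeet_eq: "tmeet (A, B, C) (A', B', C') = (A \<inter> A', B \<inter> B', C \<inter> C')"
  unfolding tmeet_def by simp

lemma tjoin_eq:
  "tjoin (A, B, C) (A', B', C') =
    (let m = med (A \<union> A') (B \<union> B') (C \<union> C') in (A \<union> A' \<union> m, B \<union> B' \<union> m, C \<union> C' \<union> m))"
  unfolding tjoin_def by (simp add: Let_def)

lemma tmeet_in_Striples:
  assumes "(A, B, C) \<in> Striples K" "(A', B', C') \<in> Striples K"
  shows "tmeet (A, B, C) (A', B', C') \<in> Striples K"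
proof -
  have bal: "balanced A B C" "balanced A' B' C'" using assms mem_Striples_iff by blast+
  then have bal_meet: "balanced (A \<inter> A') (B \<inter> B') (C \<inter> C')" unfolding balanced_def by blast
  have "C \<inter> C' - med (A \<inter> A') (B \<inter> B') (C \<inter> C') \<subseteq> (C - med A B C) \<union> (C' - med A' B' C')"
    using bal bal_meet by (simp add: med_balanced) blast
  moreover have "finite ((C - med A B C) \<union> (C' - med A' B' C'))"
    using assms mem_Striples_iff by blast
  ultimately have "finite (C \<inter> C' - med (A \<inter> A') (B \<inter> B') (C \<inter> C'))" by (rule finite_subset)
  then show ?thesis using assms bal_meet by (simp add: tmeet_eq mem_Striples_iff fincof_Int)
qed

lemma tjoin_in_Striples:
  assumes "(A, B, C) \<in> Striples K" "(A', B', C') \<in> Striples K"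
  shows "tjoin (A, B, C) (A', B', C') \<in> Striples K"
proof -
  define m where "m = med (A \<union> A') (B \<union> B') (C \<union> C')"
  have fc: "A \<in> fincof K" "B \<in> fincof K" "C \<in> fincof K"
      "A' \<in> fincof K" "B' \<in> fincof K" "C' \<in> fincof K"
    using assms mem_Striples_iff by blast+
  then have "m \<in> fincof K" unfolding m_def by (intro fincof_med fincof_Un)
  have bal_join: "balanced (A \<union> A' \<union> m) (B \<union> B' \<union> m) (C \<union> C' \<union> m)"
    unfolding balanced_def m_def med_def by blast
  have med_join: "med (A \<union> A' \<union> m) (B \<union> B' \<union> m) (C \<union> C' \<union> m) = m"
    unfolding m_def med_def by blast
  have "C \<union> C' \<union> m - m \<subseteq> (C - med A B C) \<union> (C' - med A' B' C')"
    unfolding m_def med_def by blast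
  moreover have "finite ((C - med A B C) \<union> (C' - med A' B' C'))"
    using assms mem_Striples_iff by blast
  ultimately have "finite (C \<union> C' \<union> m - m)" by (rule finite_subset)
  then show ?thesis
    unfolding tjoin_eq Let_def m_def [symmetric] mem_Striples_iff med_join
    using fc \<open>m \<in> fincof K\<close> bal_join by (simp add: fincof_Un)
qed

lemma tjoin_least:
  assumes "(C1, C2, C3) \<in> Striples K" "tle (A1, A2, A3) (C1, C2, C3)" "tle (B1, B2, B3) (C1, C2, C3)"
  shows "tle (tjoin (A1, A2, A3) (B1, B2, B3)) (C1, C2, C3)"
  using assms by (auto simp: tjoin_eq Let_def mem_Striples_iff balanced_def med_def)

lemma is_lattice_Striples: "is_lattice_with (Striples K) tle tmeet tjoin"
  unfolding is_lattice_with_def Ball_def split_paired_All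
  by (simp add: tmeet_in_Striples tjoin_in_Striples tjoin_least)
    (auto simp: tmeet_eq tjoin_eq Let_def)

lemma is_bounded_Striples: "is_bounded (Striples K) tle"
proof -
  have "({}, {}, {}) \<in> Striples K" "(K, K, K) \<in> Striples K"
    by (simp_all add: mem_Striples_iff fincof_def balanced_def med_def)
  moreover have "tle ({}, {}, {}) x \<and> tle x (K, K, K)" if "x \<in> Striples K" for x
    using that by (auto simp: Striples_def fincof_def)
  ultimately show ?thesis unfolding is_bounded_def by blast
qed

lemma tjoin_tmeet_modular:
  assumes "balanced A1 A2 A3" "balanced B1 B2 B3" "balanced C1 C2 C3"
    and "tle (A1, A2, A3) (C1, C2, C3)"
  shows "tjoin (A1, A2, A3) (tmeet (B1, B2, B3) (C1, C2, C3))
    = tmeet (tjoin (A1, A2, A3) (B1, B2, B3)) (C1, C2, C3)"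
  using assms by (auto simp: tjoin_eq tmeet_eq Let_def balanced_def med_def)

lemma is_modular_Striples: "is_modular (Striples K) tle tmeet tjoin"
  unfolding is_modular_def Ball_def split_paired_All
  by (auto simp: mem_Striples_iff intro: tjoin_tmeet_modular)

theorem corollary3p4:
  fixes K :: "'a set"
  assumes "countable K" and "infinite K"
  shows "countable (Striples K)
    \<and> is_lattice_with (Striples K) tle tmeet tjoin
    \<and> is_bounded (Striples K) tle
    \<and> is_modular (Striples K) tle tmeet tjoin"
  using countable_Striples[OF \<open>countable K\<close>] is_lattice_Striples is_bounded_Striples
    is_modular_Striples by blast

end
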